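(* If $R \subseteq \mathbb{R}$ contains an infinite strictly increasing sequence, then there exists a function $f : \mathbb{N}^{\mathbb{N}} \to R$ such that Player I has a winning strategy in $\Gamma(f)$, and for each $r \in \mathbb{R}$ and each Cantor set $C \subseteq \mathbb{N}^{\mathbb{N}}$ the set $C \cap \{f \ge r\}$ is either uncountable or empty.
   Context: Here $X = \mathbb{N}^{\mathbb{N}}$ (the branches of the full tree of finite sequences of natural numbers) with the product topology. A Cantor set is a subset homeomorphic to the middle-thirds Cantor set. $\{f \ge r\} = \{x : f(x) \ge r\}$. The game $\Gamma(f)$: Player I and Player II alternate, Player I moving first; Player I plays natural numbers $x_0, x_1, \dots$, and after each move $x_t$ Player II plays a real number $v_t$. Player II wins the run iff $f(x_0,x_1,\dots) = \limsup_{t\to\infty} v_t$; otherwise Player I wins. *)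

theory Defs
  imports "HOL-Analysis.Analysis" "HOL-Library.Liminf_Limsup"
begin

text \<open>Baire space X = nat => nat carries the product topology (instance from
Function_Topology, nat with its discrete metric topology).\<close>

primrec cantor_stage :: "nat \<Rightarrow> real set" where
  "cantor_stage 0 = {0..1}"
| "cantor_stage (Suc n) = (\<lambda>x. x / 3) ` cantor_stage n \<union> (\<lambda>x. 2/3 + x / 3) ` cantor_stage n"

definition middle_thirds_cantor :: "real set" where
  "middle_thirds_cantor = (\<Inter>n. cantor_stage n)"

definition is_cantor_set :: "(nat \<Rightarrow> nat) set \<Rightarrow> bool" where
  "is_cantor_set C \<longleftrightarrow> C homeomorphic middle_thirds_cantor"

text \<open>A strategy for Player I maps the history (own previous
moves x_0..x_(t-1), Player II's previous moves v_0..v_(t-1)) to the next move x_t.\<close>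
type_synonym strategyI = "nat list \<Rightarrow> real list \<Rightarrow> nat"

definition consistent_I :: "strategyI \<Rightarrow> (nat \<Rightarrow> nat) \<Rightarrow> (nat \<Rightarrow> real) \<Rightarrow> bool" where
  "consistent_I \<sigma> x v \<longleftrightarrow> (\<forall>t. x t = \<sigma> (map x [0..<t]) (map v [0..<t]))"

definition II_wins_run :: "((nat \<Rightarrow> nat) \<Rightarrow> real) \<Rightarrow> (nat \<Rightarrow> nat) \<Rightarrow> (nat \<Rightarrow> real) \<Rightarrow> bool" where
  "II_wins_run f x v \<longleftrightarrow> ereal (f x) = limsup (\<lambda>t. ereal (v t))"

definition winning_strategy_I :: "((nat \<Rightarrow> nat) \<Rightarrow> real) \<Rightarrow> strategyI \<Rightarrow> bool" where
  "winning_strategy_I f \<sigma> \<longleftrightarrow> (\<forall>x v. consistent_I \<sigma> x v \<longrightarrow> \<not> II_wins_run f x v)"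

end

(*
  Player I answers each real v of Player II by the index j of the value s j nearest to v
  (cutting at the midpoints of s).  If II wins a run with limsup v = s j, then j is the
  largest number that I plays infinitely often.  So I wins for f = s \<circ> h as soon as h x is
  never that number for x, and any g can be bumped by one to such an h with h \<ge> g.

  For the Cantor-set property, g must have C \<inter> {g = k} uncountable for every Cantor set C
  and every k.  There are only continuum many closed subsets of Baire space and every Cantor
  set has continuum many points, so a transfinite recursion along a well-order of the
  continuum picks distinct points p (C, B, k) in C for all triples (C, B, k), B ranging over
  sets of naturals; g labels p (C, B, k) with k.  As h \<ge> g, the set C \<inter> {s \<circ> h \<ge> r}
  contains such a level set when some s k \<ge> r, and is empty otherwise.
*)
theory Submission
  imports Defs
begin

unbundle cardinal_syntax

lemma exists_inj_transversal:
  assumes big: "\<And>i. i \<in> I \<Longrightarrow> |I| \<le>o |S i|"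
  shows "\<exists>p. inj_on p I \<and> (\<forall>i\<in>I. p i \<in> S i)"
proof -
  define r where "r = |I|"
  have card_r: "Card_order r" and field_r: "Field r = I"
    unfolding r_def by (simp_all add: card_of_card_order_on Field_card_of)
  have wf: "wf (r - Id)" and total: "total_on I r"
    using card_of_Well_order[of I] field_r
    unfolding r_def well_order_on_def linear_order_on_def by auto
  have fresh: "\<exists>y. y \<in> S i \<and> y \<notin> q ` underS r i" if "i \<in> I" for q i
  proof (rule ccontr)
    assume "\<not> ?thesis"
    then have "|S i| \<le>o |q ` underS r i|" by (auto intro: card_of_mono1)
    also have "|q ` underS r i| \<le>o |underS r i|" by (rule card_of_image)
    finally have "|S i| <o r"
      using card_of_underS[OF card_r] field_r that ordLeq_ordLess_trans by blast
    then show False using big[OF that] not_ordLess_ordLeq unfolding r_def by blast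
  qed
  define p where "p = wfrec (r - Id) (\<lambda>q i. SOME y. y \<in> S i \<and> y \<notin> q ` underS r i)"
  have p: "p i \<in> S i \<and> p i \<notin> p ` underS r i" if "i \<in> I" for i
  proof -
    have "cut p (r - Id) i ` underS r i = p ` underS r i"
      unfolding cut_def underS_def by (auto intro!: image_cong)
    then have "p i = (SOME y. y \<in> S i \<and> y \<notin> p ` underS r i)"
      unfolding p_def by (subst wfrec[OF wf]) simp
    then show ?thesis using someI_ex[OF fresh[OF that, of p]] by simp
  qed
  have "inj_on p I"
  proof (rule inj_onI)
    fix i j assume ij: "i \<in> I" "j \<in> I" "p i = p j"
    show "i = j"
    proof (rule ccontr)
      assume "i \<noteq> j"
      then have "i \<in> underS r j \<or> j \<in> underS r i"
        using total ij unfolding total_on_def underS_def by auto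
      then show False using p[of i] p[of j] ij by (metis image_eqI)
    qed
  qed
  then show ?thesis using p by blast
qed

definition cantor_point :: "nat set \<Rightarrow> real" where
  "cantor_point A = (\<Sum>n. (if n \<in> A then 2 else 0) / 3 ^ Suc n)"

lemma summable_cantor_digits: "summable (\<lambda>n. (if n \<in> A then 2 else 0) / (3::real) ^ Suc n)"
proof (rule summable_comparison_test)
  show "\<exists>N. \<forall>n\<ge>N. norm ((if n \<in> A then 2 else 0) / (3::real) ^ Suc n) \<le> 2 * (1 / 3) ^ Suc n"
    by (auto simp: power_divide)
  show "summable (\<lambda>n. 2 * (1 / 3::real) ^ Suc n)"
    by (intro summable_mult summable_Suc_iff[THEN iffD2] summable_geometric) auto
qed

lemma cantor_point_UNIV: "cantor_point UNIV = 1"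
proof -
  have "(\<lambda>n. (2/3) * (1/3::real) ^ n) sums ((2/3) * (1 / (1 - 1/3)))"
    by (intro sums_mult geometric_sums) auto
  then show ?thesis
    unfolding cantor_point_def by (simp add: sums_iff power_divide field_simps)
qed

lemma cantor_point_bounds: "0 \<le> cantor_point A" "cantor_point A \<le> 1"
proof -
  show "0 \<le> cantor_point A"
    unfolding cantor_point_def by (intro suminf_nonneg summable_cantor_digits) auto
  have "cantor_point A \<le> cantor_point UNIV"
    unfolding cantor_point_def by (intro suminf_le summable_cantor_digits) auto
  then show "cantor_point A \<le> 1" by (simp add: cantor_point_UNIV)
qed

lemma cantor_point_rec:
  "cantor_point A = (if 0 \<in> A then 2/3 else 0) + cantor_point {n. Suc n \<in> A} / 3"
proof -
  let ?d = "\<lambda>n. (if n \<in> A then 2 else 0) / (3::real) ^ Suc n"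
  have "cantor_point A = (\<Sum>n. ?d (Suc n)) + ?d 0"
    using suminf_split_head[OF summable_cantor_digits[of A]] unfolding cantor_point_def by simp
  also have "(\<Sum>n. ?d (Suc n)) = cantor_point {n. Suc n \<in> A} / 3"
    unfolding cantor_point_def
    by (subst suminf_divide[symmetric])
      (use summable_cantor_digits[of "{n. Suc n \<in> A}"] in \<open>auto simp: field_simps\<close>)
  finally show ?thesis by auto
qed

lemma cantor_point_in_stage: "cantor_point A \<in> cantor_stage m"
proof (induction m arbitrary: A)
  case 0
  then show ?case using cantor_point_bounds by simp
next
  case (Suc m)
  then show ?case
    using cantor_point_rec[of A] Suc.IH[of "{n. Suc n \<in> A}"] by (auto split: if_splits)
qed

lemma cantor_point_in_cantor: "cantor_point A \<in> middle_thirds_cantor"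
  unfolding middle_thirds_cantor_def using cantor_point_in_stage by blast

lemma cantor_point_eqD:
  assumes "cantor_point A = cantor_point B"
  shows "0 \<in> A \<longleftrightarrow> 0 \<in> B" "cantor_point {n. Suc n \<in> A} = cantor_point {n. Suc n \<in> B}"
  using assms cantor_point_rec[of A] cantor_point_rec[of B]
    cantor_point_bounds[of "{n. Suc n \<in> A}"] cantor_point_bounds[of "{n. Suc n \<in> B}"]
  by (auto split: if_splits)

lemma inj_cantor_point: "inj cantor_point"
proof -
  have "cantor_point A = cantor_point B \<Longrightarrow> n \<in> A \<longleftrightarrow> n \<in> B" for n A B
  proof (induction n arbitrary: A B)
    case 0
    then show ?case by (rule cantor_point_eqD)
  next
    case (Suc n)
    then show ?case using cantor_point_eqD(2) by blast
  qed
  then show ?thesis by (auto intro: injI)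
qed

lemma compact_cantor_stage: "compact (cantor_stage m)"
proof (induction m)
  case (Suc m)
  have "continuous_on (cantor_stage m) (\<lambda>x::real. x / 3)"
       "continuous_on (cantor_stage m) (\<lambda>x::real. 2/3 + x / 3)"
    by (intro continuous_intros; simp)+
  then show ?case using Suc.IH by (auto intro: compact_continuous_image compact_Un)
qed simp

lemma compact_middle_thirds_cantor: "compact middle_thirds_cantor"
proof -
  have "middle_thirds_cantor = cantor_stage 0 \<inter> (\<Inter>m. cantor_stage m)"
    unfolding middle_thirds_cantor_def by blast
  also have "compact \<dots>"
    by (intro compact_Int_closed compact_cantor_stage closed_INT ballI compact_imp_closed)
  finally show ?thesis .
qed

lemma Hausdorff_space_euclidean_t2: "Hausdorff_space (euclidean :: 'a::t2_space topology)"
  unfolding Hausdorff_space_def disjnt_def by (metis hausdorff open_openin)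

lemma compact_imp_closed_fun:
  fixes C :: "('i \<Rightarrow> 'a::t2_space) set"
  assumes "compact C"
  shows "closed C"
proof -
  have "Hausdorff_space (euclidean :: ('i \<Rightarrow> 'a) topology)"
    unfolding euclidean_product_topology[symmetric] Hausdorff_space_product_topology
    using Hausdorff_space_euclidean_t2 by blast
  moreover have "compactin euclidean C"
    using assms by simp
  ultimately have "closedin euclidean C"
    by (rule compactin_imp_closedin)
  then show ?thesis
    by (simp only: closed_closedin)
qed

lemma closed_if_is_cantor_set: "is_cantor_set C \<Longrightarrow> closed C"
  unfolding is_cantor_set_def
  by (metis homeomorphic_compactness compact_middle_thirds_cantor compact_imp_closed_fun)

lemma card_Pow_nat_le_cantor_set:
  assumes "is_cantor_set C"
  shows "|UNIV :: nat set set| \<le>o |C|"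
proof -
  obtain f g where hom: "homeomorphism C middle_thirds_cantor f g"
    using assms unfolding is_cantor_set_def homeomorphic_def by blast
  then have g_into: "g ` middle_thirds_cantor = C"
    and fg: "\<And>y. y \<in> middle_thirds_cantor \<Longrightarrow> f (g y) = y"
    unfolding homeomorphism_def by auto
  show ?thesis
  proof (rule card_of_ordLeqI)
    show "inj (g \<circ> cantor_point)"
    proof (rule injI)
      fix A B assume "(g \<circ> cantor_point) A = (g \<circ> cantor_point) B"
      then have "cantor_point A = cantor_point B"
        using fg cantor_point_in_cantor by (metis comp_apply)
      then show "A = B" using inj_cantor_point by (simp add: inj_eq)
    qed
    show "(g \<circ> cantor_point) A \<in> C" for A
      using cantor_point_in_cantor g_into by auto
  qed
qed

lemma closed_eq_if_hits_same_basic_sets: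
  assumes "topological_basis B" "closed C" "closed D"
    and "\<And>b. b \<in> B \<Longrightarrow> b \<inter> C = {} \<longleftrightarrow> b \<inter> D = {}"
  shows "C = D"
proof -
  have sub: "C \<subseteq> D" if "closed D" "\<And>b. b \<in> B \<Longrightarrow> b \<inter> C = {} \<longleftrightarrow> b \<inter> D = {}" for C D
  proof
    fix x assume "x \<in> C"
    show "x \<in> D"
    proof (rule ccontr)
      assume "x \<notin> D"
      then obtain b where "b \<in> B" "x \<in> b" "b \<subseteq> - D"
        using topological_basisE[OF assms(1), of "- D" x] \<open>closed D\<close> by blast
      then show False using that(2)[of b] \<open>x \<in> C\<close> by blast
    qed
  qed
  show ?thesis
  proof (rule subset_antisym)
    show "C \<subseteq> D" using sub assms(3,4) .
    show "D \<subseteq> C" using sub assms(2,4) by metis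
  qed
qed

lemma card_closed_sets_le_Pow_nat:
  "|{C :: 'a::second_countable_topology set. closed C}| \<le>o |UNIV :: nat set set|"
proof -
  obtain B :: "'a set set" where "countable B" "topological_basis B"
    using ex_countable_basis by blast
  define code where "code C = to_nat_on B ` {b \<in> B. b \<inter> C \<noteq> {}}" for C
  show ?thesis
  proof (rule card_of_ordLeqI)
    show "inj_on code {C. closed C}"
    proof (rule inj_onI)
      fix C D assume "C \<in> {C. closed C}" "D \<in> {C. closed C}" "code C = code D"
      then show "C = D"
        using \<open>topological_basis B\<close> inj_on_to_nat_on[OF \<open>countable B\<close>]
        unfolding code_def by (intro closed_eq_if_hits_same_basic_sets) (auto simp: inj_on_image_eq_iff)
    qed
  qed simp
qed

lemma uncountable_if_inj_Pow_nat:
  fixes \<phi> :: "nat set \<Rightarrow> 'a"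
  assumes "inj \<phi>" "range \<phi> \<subseteq> A"
  shows "uncountable A"
proof
  assume "countable A"
  then have "countable (UNIV :: nat set set)"
    using assms countable_subset countable_image_inj_on by metis
  then have "range (from_nat_into UNIV) = Pow (UNIV :: nat set)"
    by (simp add: range_from_nat_into)
  then show False using Cantors_theorem by blast
qed

definition triple_code :: "nat set \<Rightarrow> nat set \<Rightarrow> nat \<Rightarrow> nat set" where
  "triple_code A B k =
     {n. if n mod 3 = 0 then n div 3 \<in> A else if n mod 3 = 1 then n div 3 \<in> B else n div 3 = k}"

lemma mem_triple_code:
  "3 * n \<in> triple_code A B k \<longleftrightarrow> n \<in> A"
  "3 * n + 1 \<in> triple_code A B k \<longleftrightarrow> n \<in> B"
  "3 * n + 2 \<in> triple_code A B k \<longleftrightarrow> n = k"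
proof -
  have "Suc (3 * n) div 3 = n" "Suc (Suc (3 * n)) div 3 = n" "Suc (Suc (3 * n)) mod 3 = 2"
    by presburger+
  then show "3 * n \<in> triple_code A B k \<longleftrightarrow> n \<in> A"
    "3 * n + 1 \<in> triple_code A B k \<longleftrightarrow> n \<in> B"
    "3 * n + 2 \<in> triple_code A B k \<longleftrightarrow> n = k"
    by (simp_all add: triple_code_def)
qed

lemma inj_triple_code: "inj (\<lambda>(A, B, k). triple_code A B k)"
proof (rule injI)
  fix x y :: "nat set \<times> nat set \<times> nat"
  obtain A B k A' B' k' where xy: "x = (A, B, k)" "y = (A', B', k')"
    by (cases x, cases y) blast
  assume "(\<lambda>(A, B, k). triple_code A B k) x = (\<lambda>(A, B, k). triple_code A B k) y"
  then have "triple_code A B k = triple_code A' B' k'" by (simp add: xy)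
  then have "A = A'" "B = B'" "k = k'"
    using mem_triple_code[of _ A B k] mem_triple_code[of _ A' B' k'] by blast+
  then show "x = y" by (simp add: xy)
qed

lemma card_cantor_triples_le_Pow_nat:
  "|{C. is_cantor_set C} \<times> (UNIV :: nat set set) \<times> (UNIV :: nat set)| \<le>o |UNIV :: nat set set|"
proof -
  obtain code :: "(nat \<Rightarrow> nat) set \<Rightarrow> nat set" where code: "inj_on code {C. closed C}"
    using card_closed_sets_le_Pow_nat unfolding card_of_ordLeq[symmetric] by blast
  have "inj_on (\<lambda>(C, B, k). triple_code (code C) B k) ({C. is_cantor_set C} \<times> UNIV \<times> UNIV)"
  proof (rule inj_onI, clarsimp)
    fix C B k C' B' k'
    assume "is_cantor_set C" "is_cantor_set C'" "triple_code (code C) B k = triple_code (code C') B' k'"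
    then have "code C = code C'" "B = B'" "k = k'"
      using injD[OF inj_triple_code, of "(code C, B, k)" "(code C', B', k')"] by auto
    then show "C = C' \<and> B = B' \<and> k = k'"
      using inj_onD[OF code] closed_if_is_cantor_set \<open>is_cantor_set C\<close> \<open>is_cantor_set C'\<close> by blast
  qed
  then show ?thesis by (rule card_of_ordLeqI) simp
qed

lemma exists_fun_uncountable_level_sets:
  "\<exists>g :: (nat \<Rightarrow> nat) \<Rightarrow> nat. \<forall>C k. is_cantor_set C \<longrightarrow> uncountable (C \<inter> {x. g x = k})"
proof -
  define I where "I = {C. is_cantor_set C} \<times> (UNIV :: nat set set) \<times> (UNIV :: nat set)"
  have "|I| \<le>o |fst i|" if "i \<in> I" for i
    using card_cantor_triples_le_Pow_nat card_Pow_nat_le_cantor_set that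
    unfolding I_def by (auto intro: ordLeq_transitive)
  then obtain p where p: "inj_on p I" "\<And>i. i \<in> I \<Longrightarrow> p i \<in> fst i"
    using exists_inj_transversal[of I fst] by blast
  define g where "g x = snd (snd (inv_into I p x))" for x
  have "uncountable (C \<inter> {x. g x = k})" if "is_cantor_set C" for C k
  proof (rule uncountable_if_inj_Pow_nat)
    have I: "(C, B, k) \<in> I" for B using that unfolding I_def by simp
    show "inj (\<lambda>B. p (C, B, k))"
      using p(1) I by (auto intro!: injI dest: inj_onD)
    show "range (\<lambda>B. p (C, B, k)) \<subseteq> C \<inter> {x. g x = k}"
      using p I unfolding g_def by (auto simp: inv_into_f_f)
  qed
  then show ?thesis by blast
qed

definition limsup_value :: "(nat \<Rightarrow> nat) \<Rightarrow> nat \<Rightarrow> bool" where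
  "limsup_value x j \<longleftrightarrow> (\<forall>\<^sub>F t in sequentially. x t \<le> j) \<and> (\<exists>\<^sub>F t in sequentially. x t = j)"

lemma limsup_value_unique:
  assumes "limsup_value x i" "limsup_value x j"
  shows "i = j"
proof -
  have "j \<le> i" if "limsup_value x i" "limsup_value x j" for i j
  proof -
    have "\<exists>\<^sub>F t in sequentially. x t = j \<and> x t \<le> i"
      using that unfolding limsup_value_def by (simp add: frequently_eventually_frequently)
    then show "j \<le> i" by (auto dest: frequently_ex)
  qed
  then show ?thesis using assms by (meson antisym)
qed

lemma limsup_value_shift: "limsup_value (\<lambda>t. x (Suc t)) j \<longleftrightarrow> limsup_value x j"
  unfolding limsup_value_def frequently_def
  using eventually_sequentially_Suc[of "\<lambda>t. x t \<le> j"] eventually_sequentially_Suc[of "\<lambda>t. x t \<noteq> j"]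
  by simp

definition avoid_limsup :: "((nat \<Rightarrow> nat) \<Rightarrow> nat) \<Rightarrow> (nat \<Rightarrow> nat) \<Rightarrow> nat" where
  "avoid_limsup g x = (if limsup_value x (g x) then Suc (g x) else g x)"

lemma not_limsup_value_avoid_limsup: "\<not> limsup_value x (avoid_limsup g x)"
  unfolding avoid_limsup_def using limsup_value_unique[of x "g x" "Suc (g x)"] by auto

lemma le_avoid_limsup: "g x \<le> avoid_limsup g x"
  unfolding avoid_limsup_def by simp

definition nearest_index :: "(nat \<Rightarrow> real) \<Rightarrow> real \<Rightarrow> nat" where
  "nearest_index s v = (LEAST j. v < (s j + s (Suc j)) / 2)"

lemma nearest_index_le: "v < (s j + s (Suc j)) / 2 \<Longrightarrow> nearest_index s v \<le> j"
  unfolding nearest_index_def by (rule Least_le)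

lemma less_nearest_index:
  assumes "strict_mono s" "v < (s j + s (Suc j)) / 2" "(s i + s (Suc i)) / 2 < v"
  shows "i < nearest_index s v"
proof (rule ccontr)
  assume "\<not> i < nearest_index s v"
  then have "s (nearest_index s v) \<le> s i" "s (Suc (nearest_index s v)) \<le> s (Suc i)"
    using assms(1) by (simp_all add: strict_mono_less_eq)
  moreover have "v < (s (nearest_index s v) + s (Suc (nearest_index s v))) / 2"
    unfolding nearest_index_def using assms(2) by (rule LeastI)
  ultimately show False using assms(3) by (simp add: field_simps)
qed

lemma limsup_value_nearest_index:
  assumes s: "strict_mono s" and lim: "limsup (\<lambda>t. ereal (v t)) = ereal (s j)"
  shows "limsup_value (\<lambda>t. nearest_index s (v t)) j"
proof -
  have "s j < s (Suc j)" using s by (simp add: strict_mono_def)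
  then have "limsup (\<lambda>t. ereal (v t)) < ereal ((s j + s (Suc j)) / 2)"
    unfolding lim by simp
  then have below: "\<forall>\<^sub>F t in sequentially. v t < (s j + s (Suc j)) / 2"
    by (auto dest: Limsup_lessD)
  then have "\<forall>\<^sub>F t in sequentially. nearest_index s (v t) \<le> j"
    by (rule eventually_mono) (rule nearest_index_le)
  moreover have "\<exists>\<^sub>F t in sequentially. nearest_index s (v t) = j"
  proof (cases j)
    case 0
    from below have "\<forall>\<^sub>F t in sequentially. nearest_index s (v t) = 0"
      by (rule eventually_mono) (use nearest_index_le 0 in fastforce)
    then show ?thesis using 0 by (simp add: eventually_frequently)
  next
    case (Suc i)
    have "\<exists>\<^sub>F t in sequentially. (s i + s (Suc i)) / 2 < v t"
    proof (rule ccontr)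
      assume "\<not> ?thesis"
      then have "\<forall>\<^sub>F t in sequentially. ereal (v t) \<le> ereal ((s i + s (Suc i)) / 2)"
        by (simp add: not_frequently not_less)
      then have "ereal (s j) \<le> ereal ((s i + s (Suc i)) / 2)"
        unfolding lim[symmetric] by (rule Limsup_bounded)
      moreover have "s i < s j" using s Suc by (simp add: strict_mono_def)
      ultimately show False using Suc by simp
    qed
    then have "\<exists>\<^sub>F t in sequentially. (s i + s (Suc i)) / 2 < v t \<and> v t < (s j + s (Suc j)) / 2"
      using below by (rule frequently_eventually_frequently)
    then show ?thesis
      by (rule frequently_elim1) (use less_nearest_index[OF s] nearest_index_le Suc in force)
  qed
  ultimately show ?thesis unfolding limsup_value_def ..
qed

definition nearest_index_strategy :: "(nat \<Rightarrow> real) \<Rightarrow> strategyI" where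
  "nearest_index_strategy s xs vs = (if vs = [] then 0 else nearest_index s (last vs))"

lemma consistent_nearest_index_strategyD:
  assumes "consistent_I (nearest_index_strategy s) x v"
  shows "x (Suc t) = nearest_index s (v t)"
proof -
  have "x (Suc t) = nearest_index_strategy s (map x [0..<Suc t]) (map v [0..<Suc t])"
    using assms unfolding consistent_I_def by blast
  then show ?thesis by (simp add: nearest_index_strategy_def)
qed

lemma winning_nearest_index_strategy:
  assumes "strict_mono s" "\<And>x. \<not> limsup_value x (h x)"
  shows "winning_strategy_I (\<lambda>x. s (h x)) (nearest_index_strategy s)"
  unfolding winning_strategy_I_def II_wins_run_def
proof (intro allI impI notI)
  fix x v
  assume cons: "consistent_I (nearest_index_strategy s) x v"
    and win: "ereal (s (h x)) = limsup (\<lambda>t. ereal (v t))"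
  have "(\<lambda>t. x (Suc t)) = (\<lambda>t. nearest_index s (v t))"
    using consistent_nearest_index_strategyD[OF cons] by blast
  moreover have "limsup_value (\<lambda>t. nearest_index s (v t)) (h x)"
    using limsup_value_nearest_index[OF assms(1) win[symmetric]] .
  ultimately have "limsup_value (\<lambda>t. x (Suc t)) (h x)" by simp
  then show False using assms(2) limsup_value_shift by blast
qed

lemma uncountable_or_empty_superlevel:
  fixes s :: "nat \<Rightarrow> 'a::linorder"
  assumes "strict_mono s" "\<And>x. g x \<le> h x" "\<And>k. uncountable (C \<inter> {x. g x = k})"
  shows "uncountable (C \<inter> {x. r \<le> s (h x)}) \<or> C \<inter> {x. r \<le> s (h x)} = {}"
proof (cases "\<exists>k. r \<le> s k")
  case True
  then obtain k where "r \<le> s k" by blast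
  have "s (g x) \<le> s (h x)" for x
    using assms(2) by (simp add: strict_mono_less_eq[OF assms(1)])
  with \<open>r \<le> s k\<close> have "C \<inter> {x. g x = k} \<subseteq> C \<inter> {x. r \<le> s (h x)}"
    by (auto intro: order_trans)
  then show ?thesis using assms(3) countable_subset by blast
next
  case False
  then show ?thesis by auto
qed

theorem mainTheorem14:
  fixes R :: "real set"
  assumes "\<exists>s :: nat \<Rightarrow> real. strict_mono s \<and> range s \<subseteq> R"
  shows "\<exists>f :: (nat \<Rightarrow> nat) \<Rightarrow> real. (\<forall>x. f x \<in> R) \<and>
           (\<exists>\<sigma>. winning_strategy_I f \<sigma>) \<and>
           (\<forall>(r::real) (C :: (nat \<Rightarrow> nat) set). is_cantor_set C \<longrightarrow>
              uncountable (C \<inter> {x. f x \<ge> r}) \<or> C \<inter> {x. f x \<ge> r} = {})"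
proof -
  obtain s :: "nat \<Rightarrow> real" where s: "strict_mono s" "range s \<subseteq> R"
    using assms by blast
  obtain g :: "(nat \<Rightarrow> nat) \<Rightarrow> nat"
    where g: "\<And>C k. is_cantor_set C \<Longrightarrow> uncountable (C \<inter> {x. g x = k})"
    using exists_fun_uncountable_level_sets by blast
  show ?thesis
  proof (intro exI conjI allI impI)
    show "s (avoid_limsup g x) \<in> R" for x
      using s(2) by blast
    show "winning_strategy_I (\<lambda>x. s (avoid_limsup g x)) (nearest_index_strategy s)"
      using s(1) not_limsup_value_avoid_limsup by (rule winning_nearest_index_strategy)
    show "uncountable (C \<inter> {x. r \<le> s (avoid_limsup g x)}) \<or> C \<inter> {x. r \<le> s (avoid_limsup g x)} = {}"
      if "is_cantor_set C" for r C
      using s(1) le_avoid_limsup g[OF that] by (rule uncountable_or_empty_superlevel)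
  qed
qed

end
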